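(* Let $\alpha\ge1$. Suppose valuations are arbitrary and the (non-separable) cost function $C:(2^M)^n\to\mathbb{R}_{\ge0}$ is non-decreasing, subadditive and $\alpha$-average min-bounded. Then the Sequential Mechanism satisfies IR, NPT and WGSP, is budget-balanced, and is $\alpha H_n$-approximate with respect to social cost. If moreover $C$ is $\alpha$-average max-bounded, then the Sequential Mechanism is $\alpha$-approximate.
   Context: Players $N=\{1,\dots,n\}$, items $M$. An allocation is $A=(A_1,\dots,A_n)$, $A_i\subseteq M$. For allocations, $S\cup T=(S_1\cup T_1,\dots,S_n\cup T_n)$ and $S\subseteq T$ means $S_i\subseteq T_i$ for all $i$. $C$ non-decreasing: $C(S)\le C(T)$ for $S\subseteq T$; subadditive: $C(S\cup T)\le C(S)+C(T)$. $A|_S$ gives $A_i$ to $i\in S$ and $\emptyset$ to others; $A|_i=A|_{\{i\}}$. $C$ is $\alpha$-average min-bounded (resp. max-bounded) if for every allocation $A$ and every $T\subseteq N$ with $|T|\ge2$, $\alpha\frac{C(A|_T)}{|T|}\ge\min_{i\in T}C(A|_i)$ (resp. $\ge\max_{i\in T}C(A|_i)$). A mechanism maps declared valuations $b$ to $A$ and payments $p$; utility $u_i=v_i(A_i)-p_i$ with true $v_i$. IR: $p_i\le b_i(A_i)$; NPT: $p_i\ge0$; WGSP: for every coalition $Q$, true $v_Q$, reports $v_{-Q}$ of others, there is no $b_Q$ with $u_i(b_Q,v_{-Q})>u_i(v_Q,v_{-Q})$ for all $i\in Q$. Budget-balanced: $\sum_ip_i=C(A)$. Social cost $\pi(A)=C(A)+\sum_i(v_i(M)-v_i(A_i))$;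 $\rho$-approximate: $\pi(A)\le\rho\min_{A'}\pi(A')$ for every truthfully reported profile. $H_n=\sum_{k=1}^n1/k$. Sequential Mechanism: fix an order $1,\dots,n$. For $i=1,\dots,n$: $p_i(S)=C(A_1,\dots,A_{i-1},S,\emptyset,\dots,\emptyset)-C(A_1,\dots,A_{i-1},\emptyset,\dots,\emptyset)$ and $A_i$ is the lexicographically smallest maximizer of $b_i(S)-p_i(S)$ over $S\subseteq M$. Output $A$ and $p_i=p_i(A_i)$. *)

theory Defs
  imports Complex_Main "HOL-Library.List_Lexorder"
begin

text \<open>Players are 1..n (type nat), items are a finite set M of a linearly ordered type.\<close>

definition is_alloc :: "nat \<Rightarrow> 'b set \<Rightarrow> (nat \<Rightarrow> 'b set) \<Rightarrow> bool" where
  "is_alloc n M A \<longleftrightarrow> (\<forall>i. A i \<subseteq> M) \<and> (\<forall>i. i \<notin> {1..n} \<longrightarrow> A i = {})"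

definition restr :: "(nat \<Rightarrow> 'b set) \<Rightarrow> nat set \<Rightarrow> nat \<Rightarrow> 'b set" where
  "restr A T = (\<lambda>i. if i \<in> T then A i else {})"

definition nondecreasing_cost :: "nat \<Rightarrow> 'b set \<Rightarrow> ((nat \<Rightarrow> 'b set) \<Rightarrow> real) \<Rightarrow> bool" where
  "nondecreasing_cost n M C \<longleftrightarrow> (\<forall>S T. is_alloc n M S \<longrightarrow> is_alloc n M T \<longrightarrow>
      (\<forall>i. S i \<subseteq> T i) \<longrightarrow> C S \<le> C T)"

definition subadditive_cost :: "nat \<Rightarrow> 'b set \<Rightarrow> ((nat \<Rightarrow> 'b set) \<Rightarrow> real) \<Rightarrow> bool" where
  "subadditive_cost n M C \<longleftrightarrow> (\<forall>S T. is_alloc n M S \<longrightarrow> is_alloc n M T \<longrightarrow>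
      C (\<lambda>i. S i \<union> T i) \<le> C S + C T)"

definition avg_min_bounded :: "real \<Rightarrow> nat \<Rightarrow> 'b set \<Rightarrow> ((nat \<Rightarrow> 'b set) \<Rightarrow> real) \<Rightarrow> bool" where
  "avg_min_bounded \<alpha> n M C \<longleftrightarrow> (\<forall>A T. is_alloc n M A \<longrightarrow> T \<subseteq> {1..n} \<longrightarrow> card T \<ge> 2 \<longrightarrow>
      \<alpha> * C (restr A T) / real (card T) \<ge> Min ((\<lambda>i. C (restr A {i})) ` T))"

definition avg_max_bounded :: "real \<Rightarrow> nat \<Rightarrow> 'b set \<Rightarrow> ((nat \<Rightarrow> 'b set) \<Rightarrow> real) \<Rightarrow> bool" where
  "avg_max_bounded \<alpha> n M C \<longleftrightarrow> (\<forall>A T. is_alloc n M A \<longrightarrow> T \<subseteq> {1..n} \<longrightarrow> card T \<ge> 2 \<longrightarrow>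
      \<alpha> * C (restr A T) / real (card T) \<ge> Max ((\<lambda>i. C (restr A {i})) ` T))"

definition valuation :: "'b set \<Rightarrow> ('b set \<Rightarrow> real) \<Rightarrow> bool" where
  "valuation M v \<longleftrightarrow> v {} = 0 \<and> (\<forall>S T. S \<subseteq> T \<longrightarrow> T \<subseteq> M \<longrightarrow> v S \<le> v T)"

definition profile :: "nat \<Rightarrow> 'b set \<Rightarrow> (nat \<Rightarrow> 'b set \<Rightarrow> real) \<Rightarrow> bool" where
  "profile n M b \<longleftrightarrow> (\<forall>i\<in>{1..n}. valuation M (b i))"

definition lex_less :: "'b::linorder set \<Rightarrow> 'b set \<Rightarrow> bool" where
  "lex_less S T \<longleftrightarrow> sorted_list_of_set S < sorted_list_of_set T"

definition lex_argmax :: "'b::linorder set \<Rightarrow> ('b set \<Rightarrow> real) \<Rightarrow> 'b set" where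
  "lex_argmax M f = (THE S. S \<subseteq> M \<and> (\<forall>T. T \<subseteq> M \<longrightarrow> f T \<le> f S) \<and>
      (\<forall>T. T \<subseteq> M \<longrightarrow> f T = f S \<longrightarrow> T \<noteq> S \<longrightarrow> lex_less S T))"

definition seq_price :: "((nat \<Rightarrow> 'b set) \<Rightarrow> real) \<Rightarrow> (nat \<Rightarrow> 'b set) \<Rightarrow> nat \<Rightarrow> 'b set \<Rightarrow> real" where
  "seq_price C P i S = C (P(i := S)) - C P"

primrec seq_pre :: "((nat \<Rightarrow> 'b::linorder set) \<Rightarrow> real) \<Rightarrow> 'b set \<Rightarrow> (nat \<Rightarrow> 'b set \<Rightarrow> real)
    \<Rightarrow> nat \<Rightarrow> nat \<Rightarrow> 'b set" where
  "seq_pre C M b 0 = (\<lambda>_. {})"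
| "seq_pre C M b (Suc k) = (seq_pre C M b k)(Suc k :=
      lex_argmax M (\<lambda>S. b (Suc k) S - seq_price C (seq_pre C M b k) (Suc k) S))"

definition seq_alloc :: "nat \<Rightarrow> ((nat \<Rightarrow> 'b::linorder set) \<Rightarrow> real) \<Rightarrow> 'b set
    \<Rightarrow> (nat \<Rightarrow> 'b set \<Rightarrow> real) \<Rightarrow> nat \<Rightarrow> 'b set" where
  "seq_alloc n C M b = seq_pre C M b n"

definition seq_pay :: "nat \<Rightarrow> ((nat \<Rightarrow> 'b::linorder set) \<Rightarrow> real) \<Rightarrow> 'b set
    \<Rightarrow> (nat \<Rightarrow> 'b set \<Rightarrow> real) \<Rightarrow> nat \<Rightarrow> real" where
  "seq_pay n C M b i = seq_price C (seq_pre C M b (i - 1)) i (seq_alloc n C M b i)"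

definition seq_util :: "nat \<Rightarrow> ((nat \<Rightarrow> 'b::linorder set) \<Rightarrow> real) \<Rightarrow> 'b set
    \<Rightarrow> (nat \<Rightarrow> 'b set \<Rightarrow> real) \<Rightarrow> (nat \<Rightarrow> 'b set \<Rightarrow> real) \<Rightarrow> nat \<Rightarrow> real" where
  "seq_util n C M v b i = v i (seq_alloc n C M b i) - seq_pay n C M b i"

definition seq_IR :: "nat \<Rightarrow> ((nat \<Rightarrow> 'b::linorder set) \<Rightarrow> real) \<Rightarrow> 'b set \<Rightarrow> bool" where
  "seq_IR n C M \<longleftrightarrow> (\<forall>b. profile n M b \<longrightarrow>
      (\<forall>i\<in>{1..n}. seq_pay n C M b i \<le> b i (seq_alloc n C M b i)))"

definition seq_NPT :: "nat \<Rightarrow> ((nat \<Rightarrow> 'b::linorder set) \<Rightarrow> real) \<Rightarrow> 'b set \<Rightarrow> bool" where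
  "seq_NPT n C M \<longleftrightarrow> (\<forall>b. profile n M b \<longrightarrow> (\<forall>i\<in>{1..n}. seq_pay n C M b i \<ge> 0))"

definition seq_WGSP :: "nat \<Rightarrow> ((nat \<Rightarrow> 'b::linorder set) \<Rightarrow> real) \<Rightarrow> 'b set \<Rightarrow> bool" where
  "seq_WGSP n C M \<longleftrightarrow> (\<forall>Q v b. Q \<subseteq> {1..n} \<longrightarrow> Q \<noteq> {} \<longrightarrow> profile n M v \<longrightarrow>
      (\<forall>i\<in>Q. valuation M (b i)) \<longrightarrow>
      \<not> (\<forall>i\<in>Q. seq_util n C M v (\<lambda>j. if j \<in> Q then b j else v j) i > seq_util n C M v v i))"

definition seq_budget_balanced :: "nat \<Rightarrow> ((nat \<Rightarrow> 'b::linorder set) \<Rightarrow> real) \<Rightarrow> 'b set \<Rightarrow> bool" where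
  "seq_budget_balanced n C M \<longleftrightarrow> (\<forall>b. profile n M b \<longrightarrow>
      (\<Sum>i=1..n. seq_pay n C M b i) = C (seq_alloc n C M b))"

definition social_cost :: "nat \<Rightarrow> ((nat \<Rightarrow> 'b set) \<Rightarrow> real) \<Rightarrow> 'b set
    \<Rightarrow> (nat \<Rightarrow> 'b set \<Rightarrow> real) \<Rightarrow> (nat \<Rightarrow> 'b set) \<Rightarrow> real" where
  "social_cost n C M v A = C A + (\<Sum>i=1..n. v i M - v i (A i))"

definition seq_approx :: "real \<Rightarrow> nat \<Rightarrow> ((nat \<Rightarrow> 'b::linorder set) \<Rightarrow> real) \<Rightarrow> 'b set \<Rightarrow> bool" where
  "seq_approx \<rho> n C M \<longleftrightarrow> (\<forall>v. profile n M v \<longrightarrow> (\<forall>A'. is_alloc n M A' \<longrightarrow>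
      social_cost n C M v (seq_alloc n C M v) \<le> \<rho> * social_cost n C M v A'))"

definition harmonic :: "nat \<Rightarrow> real" where
  "harmonic n = (\<Sum>k=1..n. 1 / real k)"

end

theory Submission
  imports Defs
begin

text \<open>Player \<open>i\<close> pays the marginal cost of adding his bundle to the bundles of players
  \<open>1, \<dots>, i - 1\<close>. These payments telescope to \<open>C(A)\<close>, are nonnegative by monotonicity, and
  the empty bundle is free, which gives budget balance, NPT and IR. For any allocation \<open>A'\<close>,
  subadditivity bounds the price of \<open>A'\<^sub>i\<close> faced by player \<open>i\<close> by the stand-alone
  cost \<open>C(A'|\<^sub>i)\<close>; since \<open>i\<close> maximizes his utility, the social cost of the mechanism is at
  most \<open>\<Sum>\<^sub>i C(A'|\<^sub>i)\<close> plus the valuation loss of \<open>A'\<close>. Average min-boundedness bounds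
  \<open>\<Sum>\<^sub>i C(A'|\<^sub>i)\<close> by \<open>\<alpha> H\<^sub>n C(A')\<close>, average max-boundedness by \<open>\<alpha> C(A')\<close>.\<close>

lemma lex_less_asym: "lex_less S T \<Longrightarrow> \<not> lex_less T S"
  unfolding lex_less_def by simp

lemma ex1_lex_argmax:
  fixes M :: "'b::linorder set" and f :: "'b set \<Rightarrow> real"
  assumes "finite M"
  shows "\<exists>!S. S \<subseteq> M \<and> (\<forall>T. T \<subseteq> M \<longrightarrow> f T \<le> f S) \<and>
      (\<forall>T. T \<subseteq> M \<longrightarrow> f T = f S \<longrightarrow> T \<noteq> S \<longrightarrow> lex_less S T)"
    (is "\<exists>!S. ?argmax S")
proof (rule ex_ex1I)
  obtain S0 where S0: "S0 \<subseteq> M" "\<And>T. T \<subseteq> M \<Longrightarrow> f T \<le> f S0"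
    using ex_is_arg_min_if_finite[of "Pow M" "\<lambda>S. - f S"] assms
    by (auto simp: is_arg_min_linorder)
  define maximizers where "maximizers = {S. S \<subseteq> M \<and> f S = f S0}"
  have "finite maximizers" "S0 \<in> maximizers"
    using assms S0(1) unfolding maximizers_def by (auto intro: finite_subset[of _ "Pow M"])
  then obtain S1 where S1: "S1 \<in> maximizers"
      "\<And>T. T \<in> maximizers \<Longrightarrow> sorted_list_of_set S1 \<le> sorted_list_of_set T"
    using ex_is_arg_min_if_finite[of maximizers sorted_list_of_set]
    by (auto simp: is_arg_min_linorder)
  have "lex_less S1 T" if "T \<subseteq> M" "f T = f S1" "T \<noteq> S1" for T
  proof -
    have "T \<in> maximizers" "S1 \<subseteq> M" using that S1(1) unfolding maximizers_def by auto
    moreover have "sorted_list_of_set T \<noteq> sorted_list_of_set S1"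
      using that \<open>S1 \<subseteq> M\<close> assms sorted_list_of_set_inject[of T S1]
      by (auto dest: finite_subset)
    ultimately show ?thesis
      using S1(2) unfolding lex_less_def by (simp add: order_less_le)
  qed
  with S0 S1(1) show "\<exists>S. ?argmax S"
    unfolding maximizers_def by (intro exI[of _ S1]) auto
next
  fix S S' assume "?argmax S" "?argmax S'"
  then show "S = S'"
    by (metis lex_less_asym order_antisym)
qed

lemma lex_argmax:
  fixes M :: "'b::linorder set" and f :: "'b set \<Rightarrow> real"
  assumes "finite M"
  shows lex_argmax_subset: "lex_argmax M f \<subseteq> M"
    and lex_argmax_maximal: "T \<subseteq> M \<Longrightarrow> f T \<le> f (lex_argmax M f)"
  using theI'[OF ex1_lex_argmax[OF assms, of f]] unfolding lex_argmax_def by auto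

lemma restr_alloc: "is_alloc n M A \<Longrightarrow> is_alloc n M (restr A T)"
  unfolding is_alloc_def restr_def by auto

lemma restr_mono: "S \<subseteq> T \<Longrightarrow> restr A S i \<subseteq> restr A T i"
  unfolding restr_def by auto

lemma restr_all: "is_alloc n M A \<Longrightarrow> restr A {1..n} = A"
  unfolding is_alloc_def restr_def by (rule ext) auto

lemma nondecreasing_costD:
  "nondecreasing_cost n M C \<Longrightarrow> is_alloc n M S \<Longrightarrow> is_alloc n M T \<Longrightarrow> (\<And>i. S i \<subseteq> T i)
    \<Longrightarrow> C S \<le> C T"
  unfolding nondecreasing_cost_def by blast

lemma subadditive_costD:
  "subadditive_cost n M C \<Longrightarrow> is_alloc n M S \<Longrightarrow> is_alloc n M T
    \<Longrightarrow> C (\<lambda>i. S i \<union> T i) \<le> C S + C T"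
  unfolding subadditive_cost_def by blast

lemma avg_min_boundedD:
  "avg_min_bounded \<alpha> n M C \<Longrightarrow> is_alloc n M A \<Longrightarrow> T \<subseteq> {1..n} \<Longrightarrow> card T \<ge> 2
    \<Longrightarrow> Min ((\<lambda>i. C (restr A {i})) ` T) \<le> \<alpha> * C (restr A T) / real (card T)"
  unfolding avg_min_bounded_def by blast

lemma avg_max_boundedD:
  "avg_max_bounded \<alpha> n M C \<Longrightarrow> is_alloc n M A \<Longrightarrow> T \<subseteq> {1..n} \<Longrightarrow> card T \<ge> 2
    \<Longrightarrow> Max ((\<lambda>i. C (restr A {i})) ` T) \<le> \<alpha> * C (restr A T) / real (card T)"
  unfolding avg_max_bounded_def by blast

lemma seq_pre_unassigned: "k < i \<or> i = 0 \<Longrightarrow> seq_pre C M b k i = {}"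
  by (induction k) auto

lemma seq_pre_settled: "i \<le> k \<Longrightarrow> seq_pre C M b k i = seq_pre C M b i i"
  by (induction k) (auto simp: le_Suc_eq)

lemma seq_pre_subset: "finite M \<Longrightarrow> seq_pre C M b k i \<subseteq> M"
  by (induction k) (auto simp: lex_argmax_subset)

lemma is_alloc_seq_pre: "finite M \<Longrightarrow> k \<le> n \<Longrightarrow> is_alloc n M (seq_pre C M b k)"
  unfolding is_alloc_def by (auto simp: seq_pre_subset seq_pre_unassigned)

lemma seq_pre_Suc_mono: "seq_pre C M b k j \<subseteq> seq_pre C M b (Suc k) j"
  by (auto simp: seq_pre_unassigned)

lemma seq_pre_cong:
  "(\<And>j. j \<in> {1..k} \<Longrightarrow> b j = b' j) \<Longrightarrow> seq_pre C M b k = seq_pre C M b' k"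
  by (induction k) auto

lemma seq_pre_Suc_upd:
  "seq_pre C M b (Suc k) = (seq_pre C M b k)(Suc k := seq_pre C M b (Suc k) (Suc k))"
  by simp

lemma seq_pre_Suc_self:
  "seq_pre C M b (Suc k) (Suc k)
    = lex_argmax M (\<lambda>S. b (Suc k) S - seq_price C (seq_pre C M b k) (Suc k) S)"
  by simp

declare seq_pre.simps(2) [simp del]

lemma seq_alloc_eq_seq_pre: "i \<le> n \<Longrightarrow> seq_alloc n C M b i = seq_pre C M b i i"
  unfolding seq_alloc_def by (rule seq_pre_settled)

lemma seq_pay_eq:
  assumes "i \<in> {1..n}"
  shows "seq_pay n C M b i = C (seq_pre C M b i) - C (seq_pre C M b (i - 1))"
proof -
  obtain k where i: "i = Suc k" using assms by (cases i) auto
  show ?thesis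
    using assms unfolding seq_pay_def seq_price_def i
    by (simp add: seq_alloc_eq_seq_pre flip: seq_pre_Suc_upd)
qed

lemma seq_alloc_optimal:
  assumes "finite M" "i \<in> {1..n}" "T \<subseteq> M"
  shows "b i T - seq_price C (seq_pre C M b (i - 1)) i T
    \<le> b i (seq_alloc n C M b i) - seq_pay n C M b i"
proof -
  obtain k where i: "i = Suc k" using assms(2) by (cases i) auto
  have "seq_alloc n C M b i = lex_argmax M (\<lambda>S. b i S - seq_price C (seq_pre C M b k) i S)"
    using assms(2) i by (simp add: seq_alloc_eq_seq_pre seq_pre_Suc_self)
  then show ?thesis
    unfolding seq_pay_def using lex_argmax_maximal[OF assms(1,3)] i by simp
qed

lemma seq_price_empty: "1 \<le> i \<Longrightarrow> seq_price C (seq_pre C M b (i - 1)) i {} = 0"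
  unfolding seq_price_def by (simp add: seq_pre_unassigned fun_upd_idem)

lemma sum_seq_pay:
  assumes "C (\<lambda>_. {}) = 0"
  shows "k \<le> n \<Longrightarrow> (\<Sum>i=1..k. seq_pay n C M b i) = C (seq_pre C M b k)"
proof (induction k)
  case 0
  then show ?case using assms by simp
next
  case (Suc k)
  then show ?case using seq_pay_eq[of "Suc k" n C M b] by simp
qed

lemma seq_mechanism_IR:
  assumes "finite M"
  shows "seq_IR n C M"
  unfolding seq_IR_def
proof (intro allI impI ballI)
  fix b i assume "profile n M b" and i: "i \<in> {1..n}"
  then have "b i {} = 0" unfolding profile_def valuation_def by simp
  then show "seq_pay n C M b i \<le> b i (seq_alloc n C M b i)"
    using seq_alloc_optimal[OF assms i empty_subsetI, of b C] seq_price_empty[of i C M b] i by simp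
qed

lemma seq_mechanism_NPT:
  assumes "finite M" "nondecreasing_cost n M C"
  shows "seq_NPT n C M"
  unfolding seq_NPT_def
proof (intro allI impI ballI)
  fix b i assume i: "i \<in> {1..n}"
  then obtain k where k: "i = Suc k" by (cases i) auto
  have "is_alloc n M (seq_pre C M b k)" "is_alloc n M (seq_pre C M b (Suc k))"
    using is_alloc_seq_pre[OF assms(1)] i k by auto
  then have "C (seq_pre C M b k) \<le> C (seq_pre C M b (Suc k))"
    by (rule nondecreasing_costD[OF assms(2)]) (rule seq_pre_Suc_mono)
  moreover have "seq_pay n C M b i = C (seq_pre C M b (Suc k)) - C (seq_pre C M b k)"
    using seq_pay_eq[OF i] k by simp
  ultimately show "seq_pay n C M b i \<ge> 0" by simp
qed

lemma seq_mechanism_budget_balanced: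
  assumes "C (\<lambda>_. {}) = 0"
  shows "seq_budget_balanced n C M"
  unfolding seq_budget_balanced_def seq_alloc_def
  using sum_seq_pay[where C=C and k=n and n=n, OF assms order_refl] by blast

text \<open>The first member of a deviating coalition faces the same prices as under truthful
  reporting, and at those prices the truthful choice already maximizes his utility.\<close>
lemma seq_mechanism_WGSP:
  assumes "finite M"
  shows "seq_WGSP n C M"
  unfolding seq_WGSP_def
proof (intro allI impI notI)
  fix Q v b
  assume Q: "Q \<subseteq> {1..n}" "Q \<noteq> {}"
    and gain: "\<forall>i\<in>Q. seq_util n C M v (\<lambda>j. if j \<in> Q then b j else v j) i > seq_util n C M v v i"
  define b' where "b' = (\<lambda>j. if j \<in> Q then b j else v j)"
  define i where "i = Min Q"
  have "finite Q" using Q(1) by (rule finite_subset) simp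
  then have iQ: "i \<in> Q" and first: "\<And>j. j \<in> Q \<Longrightarrow> i \<le> j"
    using Q(2) unfolding i_def by auto
  then have i: "i \<in> {1..n}" using Q(1) by auto
  have "seq_pre C M b' (i - 1) = seq_pre C M v (i - 1)"
    by (rule seq_pre_cong) (auto simp: b'_def dest: first)
  then have "seq_util n C M v b' i
      = v i (seq_alloc n C M b' i) - seq_price C (seq_pre C M v (i - 1)) i (seq_alloc n C M b' i)"
    unfolding seq_util_def seq_pay_def by simp
  also have "\<dots> \<le> seq_util n C M v v i"
    unfolding seq_util_def
    by (rule seq_alloc_optimal[OF assms i]) (simp add: seq_alloc_def seq_pre_subset assms)
  finally have "seq_util n C M v b' i \<le> seq_util n C M v v i" .
  moreover have "seq_util n C M v b' i > seq_util n C M v v i"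
    using gain iQ unfolding b'_def by blast
  ultimately show False by linarith
qed

lemma seq_price_le_standalone:
  assumes "finite M" "subadditive_cost n M C" "i \<in> {1..n}" "is_alloc n M A"
  shows "seq_price C (seq_pre C M b (i - 1)) i (A i) \<le> C (restr A {i})"
proof -
  let ?P = "seq_pre C M b (i - 1)"
  have upd: "?P(i := A i) = (\<lambda>j. ?P j \<union> restr A {i} j)"
    using assms(3) seq_pre_unassigned[of "i - 1" i C M b] by (auto simp: restr_def fun_eq_iff)
  have "is_alloc n M ?P" using assms(1,3) by (intro is_alloc_seq_pre) auto
  then have "C (\<lambda>j. ?P j \<union> restr A {i} j) \<le> C ?P + C (restr A {i})"
    by (rule subadditive_costD[OF assms(2) _ restr_alloc[OF assms(4)]])
  then show ?thesis unfolding seq_price_def upd by simp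
qed

lemma social_cost_seq_alloc_le:
  assumes "finite M" "C (\<lambda>_. {}) = 0" "subadditive_cost n M C" "is_alloc n M A"
  shows "social_cost n C M v (seq_alloc n C M v)
    \<le> (\<Sum>i=1..n. C (restr A {i})) + (\<Sum>i=1..n. v i M - v i (A i))"
proof -
  let ?S = "seq_alloc n C M v"
  have "seq_pay n C M v i + (v i M - v i (?S i)) \<le> C (restr A {i}) + (v i M - v i (A i))"
    if i: "i \<in> {1..n}" for i
    using seq_alloc_optimal[OF assms(1) i, of "A i" v C]
      seq_price_le_standalone[OF assms(1,3) i assms(4), of v] assms(4)
    unfolding is_alloc_def by simp
  then have "(\<Sum>i=1..n. seq_pay n C M v i + (v i M - v i (?S i)))
      \<le> (\<Sum>i=1..n. C (restr A {i}) + (v i M - v i (A i)))"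
    by (rule sum_mono)
  moreover have "C ?S = (\<Sum>i=1..n. seq_pay n C M v i)"
    unfolding seq_alloc_def
    by (rule sum_seq_pay[where C=C and k=n and n=n, OF assms(2) order_refl, symmetric])
  ultimately show ?thesis unfolding social_cost_def by (simp add: sum.distrib)
qed

text \<open>\<open>\<rho> \<ge> 1\<close> is only demanded for \<open>n \<ge> 1\<close>, so that \<open>\<rho> = \<alpha> H\<^sub>0 = 0\<close> is admissible when there
  are no players.\<close>
lemma seq_approx_if_standalone_le:
  assumes "finite M" "C (\<lambda>_. {}) = 0" "subadditive_cost n M C"
    and standalone: "\<And>A. is_alloc n M A \<Longrightarrow> (\<Sum>i=1..n. C (restr A {i})) \<le> \<rho> * C A"
    and \<rho>: "n \<ge> 1 \<Longrightarrow> \<rho> \<ge> 1"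
  shows "seq_approx \<rho> n C M"
  unfolding seq_approx_def
proof (intro allI impI)
  fix v A assume v: "profile n M v" and A: "is_alloc n M A"
  define D where "D = (\<Sum>i=1..n. v i M - v i (A i))"
  have "D \<ge> 0"
    unfolding D_def
    by (intro sum_nonneg) (use v A in \<open>auto simp: profile_def valuation_def is_alloc_def\<close>)
  have "D \<le> \<rho> * D"
  proof (cases "n = 0")
    case True
    then show ?thesis by (simp add: D_def)
  next
    case False
    then show ?thesis using \<rho> \<open>D \<ge> 0\<close> mult_right_mono[of 1 \<rho> D] by simp
  qed
  then show "social_cost n C M v (seq_alloc n C M v) \<le> \<rho> * social_cost n C M v A"
    using social_cost_seq_alloc_le[OF assms(1-3) A, of v] standalone[OF A]
    unfolding social_cost_def D_def[symmetric] by (simp add: distrib_left)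
qed

lemma harmonic_Suc: "harmonic (Suc k) = harmonic k + 1 / real (Suc k)"
  unfolding harmonic_def by simp

lemma harmonic_nonneg: "harmonic n \<ge> 0"
  unfolding harmonic_def by (simp add: sum_nonneg)

lemma harmonic_ge_1: "n \<ge> 1 \<Longrightarrow> harmonic n \<ge> 1"
  unfolding harmonic_def using member_le_sum[of 1 "{1..n}" "\<lambda>k. 1 / real k"] by simp

text \<open>Removing the cheapest stand-alone player of \<open>T\<close> costs at most the average
  \<open>\<alpha> C(A|T) / |T|\<close>; induction on \<open>|T|\<close> sums these averages to the harmonic number.\<close>
lemma standalone_sum_le_harmonic:
  assumes "\<alpha> \<ge> 1" "\<forall>A. is_alloc n M A \<longrightarrow> C A \<ge> 0" "nondecreasing_cost n M C"
    "avg_min_bounded \<alpha> n M C" "is_alloc n M A"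
  shows "T \<subseteq> {1..n} \<Longrightarrow> (\<Sum>i\<in>T. C (restr A {i})) \<le> \<alpha> * harmonic (card T) * C (restr A T)"
proof (induction "card T" arbitrary: T)
  case 0
  have "finite T" using "0.prems" by (rule finite_subset) simp
  then show ?case using "0.hyps"[symmetric] by (simp add: harmonic_def)
next
  case (Suc k)
  define c where "c = (\<lambda>i. C (restr A {i}))"
  have card: "card T = Suc k" using Suc.hyps(2) by simp
  have finT: "finite T" using Suc.prems by (rule finite_subset) simp
  moreover have "T \<noteq> {}" using card by auto
  ultimately obtain j where j: "j \<in> T" "c j = Min (c ` T)"
    using Min_in[of "c ` T"] by fastforce
  have mono: "C (restr A S) \<le> C (restr A T)" if "S \<subseteq> T" for S
    by (rule nondecreasing_costD[OF assms(3) restr_alloc[OF assms(5)] restr_alloc[OF assms(5)]])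
      (rule restr_mono[OF that])
  have nonneg: "C (restr A S) \<ge> 0" for S using assms(2) restr_alloc[OF assms(5)] by blast
  have cj: "c j \<le> \<alpha> * C (restr A T) / real (Suc k)"
  proof (cases "k = 0")
    case True
    then have "T = {j}" using card j(1) by (auto simp: card_Suc_eq)
    then show ?thesis using True assms(1) nonneg[of T]
      by (simp add: c_def mult_le_cancel_right1)
  next
    case False
    then have "card T \<ge> 2" using card by simp
    then have "Min (c ` T) \<le> \<alpha> * C (restr A T) / real (card T)"
      unfolding c_def by (rule avg_min_boundedD[OF assms(4,5) Suc.prems])
    then show ?thesis using j(2) card by simp
  qed
  have "(\<Sum>i\<in>T - {j}. c i) \<le> \<alpha> * harmonic k * C (restr A (T - {j}))"
    using Suc.hyps(1)[of "T - {j}"] card Suc.prems finT j(1) unfolding c_def by auto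
  also have "\<dots> \<le> \<alpha> * harmonic k * C (restr A T)"
    using assms(1) harmonic_nonneg by (intro mult_left_mono mono) auto
  finally have "(\<Sum>i\<in>T. c i) \<le> \<alpha> * C (restr A T) / real (Suc k) + \<alpha> * harmonic k * C (restr A T)"
    using cj sum.remove[OF finT j(1), of c] by linarith
  then show ?case
    unfolding c_def card harmonic_Suc by (simp add: algebra_simps)
qed

lemma standalone_sum_le_max_bounded:
  assumes "\<alpha> \<ge> 1" "\<forall>A. is_alloc n M A \<longrightarrow> C A \<ge> 0" "avg_max_bounded \<alpha> n M C"
    "is_alloc n M A" "T \<subseteq> {1..n}"
  shows "(\<Sum>i\<in>T. C (restr A {i})) \<le> \<alpha> * C (restr A T)"
proof -
  have finT: "finite T" using assms(5) by (rule finite_subset) simp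
  have nonneg: "C (restr A S) \<ge> 0" for S using assms(2) restr_alloc[OF assms(4)] by blast
  show ?thesis
  proof (cases "card T \<ge> 2")
    case False
    then consider "card T = 0" | "card T = 1" by linarith
    then show ?thesis
    proof cases
      case 1
      then show ?thesis using finT assms(1) nonneg[of T] by simp
    next
      case 2
      then obtain i where "T = {i}" by (rule card_1_singletonE)
      then show ?thesis using assms(1) nonneg[of T] by (simp add: mult_le_cancel_right1)
    qed
  next
    case True
    let ?m = "Max ((\<lambda>i. C (restr A {i})) ` T)"
    have "(\<Sum>i\<in>T. C (restr A {i})) \<le> real (card T) * ?m"
      using finT sum_bounded_above[of T "\<lambda>i. C (restr A {i})" ?m] by simp
    also have "\<dots> \<le> \<alpha> * C (restr A T)"
    proof -
      have "?m \<le> \<alpha> * C (restr A T) / real (card T)"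
        by (rule avg_max_boundedD[OF assms(3-5) True])
      then show ?thesis using True by (simp add: field_simps)
    qed
    finally show ?thesis .
  qed
qed

theorem mainTheorem17:
  fixes n :: nat and M :: "'b::linorder set" and C :: "(nat \<Rightarrow> 'b set) \<Rightarrow> real" and \<alpha> :: real
  assumes "finite M"
    and "\<alpha> \<ge> 1"
    and "\<forall>A. is_alloc n M A \<longrightarrow> C A \<ge> 0"
    and "C (\<lambda>_. {}) = 0"
    and "nondecreasing_cost n M C"
    and "subadditive_cost n M C"
    and "avg_min_bounded \<alpha> n M C"
  shows "seq_IR n C M \<and> seq_NPT n C M \<and> seq_WGSP n C M \<and> seq_budget_balanced n C M
         \<and> seq_approx (\<alpha> * harmonic n) n C M
         \<and> (avg_max_bounded \<alpha> n M C \<longrightarrow> seq_approx \<alpha> n C M)"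
proof (intro conjI impI)
  show "seq_IR n C M" "seq_NPT n C M" "seq_WGSP n C M" "seq_budget_balanced n C M"
    using assms by (simp_all add: seq_mechanism_IR seq_mechanism_NPT seq_mechanism_WGSP
        seq_mechanism_budget_balanced)
  show "seq_approx (\<alpha> * harmonic n) n C M"
  proof (rule seq_approx_if_standalone_le[OF assms(1,4,6)])
    fix A assume A: "is_alloc n M A"
    show "(\<Sum>i=1..n. C (restr A {i})) \<le> \<alpha> * harmonic n * C A"
      using standalone_sum_le_harmonic[OF assms(2,3,5,7) A order_refl]
      unfolding restr_all[OF A] by simp
  next
    assume "n \<ge> 1"
    then show "\<alpha> * harmonic n \<ge> 1"
      using assms(2) harmonic_ge_1 mult_mono[of 1 \<alpha> 1 "harmonic n"] by simp
  qed
  assume max_bounded: "avg_max_bounded \<alpha> n M C"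
  show "seq_approx \<alpha> n C M"
  proof (rule seq_approx_if_standalone_le[OF assms(1,4,6)])
    fix A assume A: "is_alloc n M A"
    show "(\<Sum>i=1..n. C (restr A {i})) \<le> \<alpha> * C A"
      using standalone_sum_le_max_bounded[OF assms(2,3) max_bounded A order_refl]
      unfolding restr_all[OF A] .
  qed (rule assms(2))
qed

end
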